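(* Let $k$ be a field, $R=k[x_1,\ldots,x_n]$, and let $I\subset R$ be a strongly stable monomial ideal whose last generator is $M_\omega=x^\omega$ with $\omega=(\omega_1,\ldots,\omega_\mu)\in\mathbb{Z}^\mu_{\ge0}$, $\omega_\mu>0$, where $\mu\ge 2$. Suppose $I$ contains $x_{\mu-1}^t$ for some $t>0$. Then \[ |\mathcal{I}_{\mu-1}|\le \sum_{\alpha\in\mathcal{I}_{\mu-2}} f_{\mu-1}(\alpha), \] with equality if and only if $\omega=(0,\ldots,0,\omega_\mu)$, i.e. $M_\omega=x_\mu^{\omega_\mu}$. In particular $\mathcal{I}_{\mu-1}$ is a finite set.
   Context: Monomial order: degree reverse lexicographic. For monomials $M=x^\alpha$, $N=x^\beta$ in $R$, $M>N$ iff $\deg M>\deg N$, or $\deg M=\deg N$ and for the largest index $s$ with $\alpha_s\ne\beta_s$ one has $\alpha_s<\beta_s$. For $\alpha\in\mathbb{Z}^s_{\ge0}$ ($s\le n$) write $x^\alpha=x_1^{\alpha_1}\cdots x_s^{\alpha_s}$ and $|\alpha|=\sum\alpha_j$; for $\alpha,\beta\in\mathbb{Z}^s_{\ge0}$ set $\alpha\le\beta$ iff $x^\alpha\le x^\beta$. A monomial ideal $I$ is strongly stable if for every monomial $M$, $x_iM\in I$ implies $x_jM\in I$ for all $j<i$. $\mathcal{G}(I)$ denotes the minimal set of monomial generators. For a monomial $M$, $\max M$ is the largest $i$ with $x_i\mid M$. The last generator $M_\omega$ of $I$ is the element of $\mathcal{G}(I)$ of maximal degree which is smallest (in the order) among elements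 of $\mathcal{G}(I)$ of that degree; $\mu=\max M_\omega$. Define $f_1=\min\{t: x_1^t\in I\}$ and, for $2\le i\le\mu$ and $\alpha\in\mathbb{Z}^{i-1}_{\ge0}$, $f_i(\alpha)=\min\{t\ge0: x^\alpha x_i^t\in I\}\in\mathbb{Z}_{\ge0}\cup\{\infty\}$ (minimum of the empty set is $\infty$). For $1\le i\le\mu-2$, $\mathcal{I}_i$ is the set of $(\alpha_1,\ldots,\alpha_i)\in\mathbb{Z}^i_{\ge0}$ with $0\le\alpha_1<f_1$ and $0\le\alpha_j<f_j(\alpha_1,\ldots,\alpha_{j-1})$ for $2\le j\le i$; $\mathcal{I}_{\mu-1}$ is the set of $(\alpha_1,\ldots,\alpha_{\mu-1})\in\mathbb{Z}^{\mu-1}_{\ge0}$ satisfying the same inequalities for $j\le\mu-1$ and additionally $(\alpha_1,\ldots,\alpha_{\mu-1})\ge(\omega_1,\ldots,\omega_{\mu-1})$. Convention: $\mathcal{I}_0$ consists of the empty tuple, on which $f_1$ takes the value $f_1$. *)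

theory Defs
  imports Main "HOL-Library.Extended_Nat"
begin

text \<open>Monomials of R = k[x_1,...,x_n] are represented by exponent vectors
  a :: nat \<Rightarrow> nat supported on {1..n}. A monomial ideal is represented by
  the set of (exponent vectors of) monomials it contains.\<close>

definition monomials :: "nat \<Rightarrow> (nat \<Rightarrow> nat) set" where
  "monomials n = {a. \<forall>i. i \<notin> {1..n} \<longrightarrow> a i = 0}"

definition mdeg :: "nat \<Rightarrow> (nat \<Rightarrow> nat) \<Rightarrow> nat" where
  "mdeg n a = (\<Sum>i\<in>{1..n}. a i)"

text \<open>Degree reverse lexicographic order: mon_less n a b means x^a < x^b.\<close>
definition mon_less :: "nat \<Rightarrow> (nat \<Rightarrow> nat) \<Rightarrow> (nat \<Rightarrow> nat) \<Rightarrow> bool" where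
  "mon_less n a b \<longleftrightarrow> mdeg n a < mdeg n b \<or>
     (mdeg n a = mdeg n b \<and> (\<exists>s\<in>{1..n}. a s \<noteq> b s) \<and>
      (let s = (GREATEST s. s \<in> {1..n} \<and> a s \<noteq> b s) in b s < a s))"

definition mon_le :: "nat \<Rightarrow> (nat \<Rightarrow> nat) \<Rightarrow> (nat \<Rightarrow> nat) \<Rightarrow> bool" where
  "mon_le n a b \<longleftrightarrow> a = b \<or> mon_less n a b"

definition monomial_ideal :: "nat \<Rightarrow> (nat \<Rightarrow> nat) set \<Rightarrow> bool" where
  "monomial_ideal n I \<longleftrightarrow> I \<subseteq> monomials n \<and>
     (\<forall>a\<in>I. \<forall>b\<in>monomials n. (\<forall>i. a i \<le> b i) \<longrightarrow> b \<in> I)"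

definition strongly_stable :: "nat \<Rightarrow> (nat \<Rightarrow> nat) set \<Rightarrow> bool" where
  "strongly_stable n I \<longleftrightarrow> (\<forall>a\<in>monomials n. \<forall>i j. 1 \<le> j \<and> j < i \<and> i \<le> n \<and>
       a(i := Suc (a i)) \<in> I \<longrightarrow> a(j := Suc (a j)) \<in> I)"

definition min_gens :: "(nat \<Rightarrow> nat) set \<Rightarrow> (nat \<Rightarrow> nat) set" where
  "min_gens I = {a \<in> I. \<not> (\<exists>b\<in>I. b \<noteq> a \<and> (\<forall>i. b i \<le> a i))}"

definition is_last_gen :: "nat \<Rightarrow> (nat \<Rightarrow> nat) set \<Rightarrow> (nat \<Rightarrow> nat) \<Rightarrow> bool" where
  "is_last_gen n I w \<longleftrightarrow> w \<in> min_gens I \<and>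
     (\<forall>b\<in>min_gens I. mdeg n b \<le> mdeg n w) \<and>
     (\<forall>b\<in>min_gens I. mdeg n b = mdeg n w \<longrightarrow> mon_le n w b)"

definition mon_of_list :: "nat list \<Rightarrow> nat \<Rightarrow> nat" where
  "mon_of_list al = (\<lambda>j. if 1 \<le> j \<and> j \<le> length al then al ! (j - 1) else 0)"

text \<open>f_i(alpha) = min{t. x^alpha x_i^t \<in> I} (infinity if empty); alpha has length i-1.
  For i = 1 and alpha = [] this is f_1.\<close>
definition fval :: "(nat \<Rightarrow> nat) set \<Rightarrow> nat \<Rightarrow> nat list \<Rightarrow> enat" where
  "fval I i al = (if \<exists>t. (mon_of_list al)(i := t) \<in> I
                  then enat (LEAST t. (mon_of_list al)(i := t) \<in> I) else \<infinity>)"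

text \<open>The set \<I>_i (without the extra condition for i = mu - 1).\<close>
definition Iset :: "(nat \<Rightarrow> nat) set \<Rightarrow> nat \<Rightarrow> nat list set" where
  "Iset I i = {al. length al = i \<and>
      (\<forall>j\<in>{1..i}. enat (al ! (j - 1)) < fval I j (take (j - 1) al))}"

definition Ilast :: "nat \<Rightarrow> (nat \<Rightarrow> nat) set \<Rightarrow> (nat \<Rightarrow> nat) \<Rightarrow> nat \<Rightarrow> nat list set" where
  "Ilast n I w mu = {al \<in> Iset I (mu - 1).
      mon_le n (mon_of_list (map w [1..<mu])) (mon_of_list al)}"

end

theory Submission
  imports Defs
begin

text \<open>Strong stability lets the pure power x_{\<mu>-1}^t be traded for x_j^t with j < \<mu> - 1, so
  every exponent of a tuple in \<I>_i (i \<le> \<mu> - 1) is below t and the sets \<I>_i are finite.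
  Counting the last coordinate gives |\<I>_{\<mu>-1}'| = \<Sum> f_{\<mu>-1}(\<alpha>) over \<alpha> \<in> \<I>_{\<mu>-2}, where
  \<I>_{\<mu>-1}' is \<I>_{\<mu>-1} without the order condition. The order condition removes nothing
  iff (\<omega>_1,\<dots>,\<omega>_{\<mu>-1}) is the zero tuple: the zero tuple lies in \<I>_{\<mu>-1}' (as 1 \<notin> I),
  and the only monomial below 1 is 1 itself.\<close>

lemma sum_enat: "(\<Sum>x\<in>A. enat (f x)) = enat (\<Sum>x\<in>A. f x)"
  by (induction A rule: infinite_finite_induct) (auto simp: zero_enat_def)

lemma strongly_stable_shift_exponent:
  assumes ss: "strongly_stable n I" and ji: "1 \<le> j" "j < i" "i \<le> n"
  shows "\<forall>a\<in>monomials n. a(i := a i + k) \<in> I \<longrightarrow> a(j := a j + k) \<in> I"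
proof (induction k)
  case (Suc k)
  show ?case
  proof (intro ballI impI)
    fix a assume a: "a \<in> monomials n" and aI: "a(i := a i + Suc k) \<in> I"
    define b where "b = a(i := a i + k)"
    define a' where "a' = a(j := Suc (a j))"
    have "b \<in> monomials n" "a' \<in> monomials n"
      using a ji by (auto simp: a'_def b_def monomials_def)
    moreover have "b(i := Suc (b i)) = a(i := a i + Suc k)"
      by (simp add: b_def)
    ultimately have "b(j := Suc (b j)) \<in> I"
      using ss ji aI unfolding strongly_stable_def by metis
    moreover have "b(j := Suc (b j)) = a'(i := a' i + k)"
      using ji by (auto simp: a'_def b_def fun_eq_iff)
    ultimately have "a'(i := a' i + k) \<in> I"
      by simp
    with Suc.IH \<open>a' \<in> monomials n\<close> have "a'(j := a' j + k) \<in> I"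
      by blast
    then show "a(j := a j + Suc k) \<in> I"
      by (simp add: a'_def)
  qed
qed simp

lemma strongly_stable_pure_power:
  assumes "strongly_stable n I" and "1 \<le> j" "j \<le> i" "i \<le> n"
    and "(\<lambda>_. 0)(i := t) \<in> I"
  shows "(\<lambda>_. 0)(j := t) \<in> I"
proof (cases "j = i")
  case False
  have "(\<lambda>_. 0::nat) \<in> monomials n"
    by (simp add: monomials_def)
  with assms False show ?thesis
    using strongly_stable_shift_exponent[of n I j i t] by fastforce
qed (use assms in simp)

lemma zero_notin_ideal_with_last_gen:
  assumes "is_last_gen n I w" and "w \<noteq> (\<lambda>_. 0)"
  shows "(\<lambda>_. 0) \<notin> I"
  using assms unfolding is_last_gen_def min_gens_def by auto

lemma mdeg_eq_0_iff: "mdeg n a = 0 \<longleftrightarrow> (\<forall>i\<in>{1..n}. a i = 0)"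
  by (simp add: mdeg_def)

lemma not_mon_less_zero: "\<not> mon_less n a (\<lambda>_. 0)"
proof
  assume "mon_less n a (\<lambda>_. 0)"
  then have "mdeg n a = 0" "\<exists>s\<in>{1..n}. a s \<noteq> 0"
    by (auto simp: mon_less_def mdeg_def[of n "\<lambda>_. 0"])
  then show False
    by (simp add: mdeg_eq_0_iff)
qed

lemma mon_le_zero_iff: "mon_le n a (\<lambda>_. 0) \<longleftrightarrow> a = (\<lambda>_. 0)"
  by (simp add: mon_le_def not_mon_less_zero)

lemma zero_mon_le:
  assumes "a \<in> monomials n"
  shows "mon_le n (\<lambda>_. 0) a"
proof (cases "a = (\<lambda>_. 0)")
  case False
  then obtain s where "a s \<noteq> 0" by auto
  with assms have "s \<in> {1..n}"
    by (auto simp: monomials_def)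
  with \<open>a s \<noteq> 0\<close> have "mdeg n a \<noteq> 0"
    by (auto simp: mdeg_eq_0_iff)
  then have "mdeg n (\<lambda>_. 0) < mdeg n a"
    by (simp add: mdeg_def[of n "\<lambda>_. 0"])
  then show ?thesis
    unfolding mon_le_def mon_less_def by blast
qed (simp add: mon_le_def)

lemma mon_of_list_in_monomials: "length xs \<le> n \<Longrightarrow> mon_of_list xs \<in> monomials n"
  by (auto simp: mon_of_list_def monomials_def)

lemma mon_of_list_Suc: "p < length xs \<Longrightarrow> mon_of_list xs (Suc p) = xs ! p"
  by (simp add: mon_of_list_def)

lemma mon_of_list_eq_zero_iff: "mon_of_list xs = (\<lambda>_. 0) \<longleftrightarrow> (\<forall>x\<in>set xs. x = 0)"
proof
  assume "mon_of_list xs = (\<lambda>_. 0)"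
  then show "\<forall>x\<in>set xs. x = 0"
    by (metis in_set_conv_nth mon_of_list_Suc)
next
  assume "\<forall>x\<in>set xs. x = 0"
  then show "mon_of_list xs = (\<lambda>_. 0)"
    by (auto simp: mon_of_list_def fun_eq_iff)
qed

lemma mon_of_list_replicate_zero: "mon_of_list (replicate k 0) = (\<lambda>_. 0)"
  by (simp add: mon_of_list_eq_zero_iff)

lemma fval_le_pure_power:
  assumes "monomial_ideal n I" and "(\<lambda>_. 0)(j := t) \<in> I"
    and "1 \<le> j" "j \<le> n" and "length xs < j"
  shows "fval I j xs \<le> enat t"
proof -
  have "(mon_of_list xs)(j := t) \<in> monomials n"
    using mon_of_list_in_monomials[of xs n] assms(3-5) by (auto simp: monomials_def)
  moreover have "\<forall>i. ((\<lambda>_. 0)(j := t)) i \<le> ((mon_of_list xs)(j := t)) i"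
    by simp
  ultimately have "(mon_of_list xs)(j := t) \<in> I"
    using assms(1,2) unfolding monomial_ideal_def by blast
  then show ?thesis
    by (auto simp: fval_def intro: Least_le)
qed

lemma Iset_entries_less:
  assumes "monomial_ideal n I" "strongly_stable n I"
    and "1 \<le> i" "i \<le> n" "(\<lambda>_. 0)(i := t) \<in> I"
    and "k \<le> i" and "xs \<in> Iset I k"
  shows "set xs \<subseteq> {..<t}"
proof
  fix x assume "x \<in> set xs"
  then obtain p where p: "p < k" "xs ! p = x"
    using assms(7) by (auto simp: in_set_conv_nth Iset_def)
  have "\<forall>j\<in>{1..k}. enat (xs ! (j - 1)) < fval I j (take (j - 1) xs)"
    using assms(7) by (simp add: Iset_def)
  then have "enat (xs ! (Suc p - 1)) < fval I (Suc p) (take (Suc p - 1) xs)"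
    using p by (intro bspec[of _ _ "Suc p"]) auto
  with p have "enat x < fval I (Suc p) (take p xs)"
    by simp
  also have "\<dots> \<le> enat t"
    using assms p strongly_stable_pure_power[of n I "Suc p" i t]
    by (intro fval_le_pure_power[of n]) auto
  finally show "x \<in> {..<t}" by simp
qed

lemma finite_Iset:
  assumes "monomial_ideal n I" "strongly_stable n I"
    and "1 \<le> i" "i \<le> n" "(\<lambda>_. 0)(i := t) \<in> I" and "k \<le> i"
  shows "finite (Iset I k)"
proof (rule finite_subset)
  show "Iset I k \<subseteq> {xs. set xs \<subseteq> {..<t} \<and> length xs = k}"
    using Iset_entries_less[OF assms] by (auto simp: Iset_def)
qed (rule finite_lists_length_eq, simp)

lemma Iset_Suc:
  "Iset I (Suc m) = (\<lambda>(xs, b). xs @ [b]) ` (SIGMA xs:Iset I m. {b. enat b < fval I (Suc m) xs})"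
proof (intro equalityI subsetI)
  fix ys assume ys: "ys \<in> Iset I (Suc m)"
  then have len: "length ys = Suc m"
    by (simp add: Iset_def)
  then have "ys = take m ys @ [ys ! m]"
    by (metis lessI take_Suc_conv_app_nth take_all_iff order_refl)
  moreover have "take m ys \<in> Iset I m"
    using ys len by (auto simp: Iset_def min_def)
  moreover have "enat (ys ! m) < fval I (Suc m) (take m ys)"
    using ys by (force simp: Iset_def)
  ultimately show "ys \<in> (\<lambda>(xs, b). xs @ [b]) ` (SIGMA xs:Iset I m. {b. enat b < fval I (Suc m) xs})"
    by (intro image_eqI[where x = "(take m ys, ys ! m)"]) auto
next
  fix ys assume "ys \<in> (\<lambda>(xs, b). xs @ [b]) ` (SIGMA xs:Iset I m. {b. enat b < fval I (Suc m) xs})"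
  then obtain xs b where xs: "xs \<in> Iset I m" and b: "enat b < fval I (Suc m) xs"
    and ys: "ys = xs @ [b]"
    by auto
  have len: "length xs = m"
    using xs by (simp add: Iset_def)
  show "ys \<in> Iset I (Suc m)"
    unfolding Iset_def
  proof (intro CollectI conjI ballI)
    fix j assume "j \<in> {1..Suc m}"
    then consider "j = Suc m" | "j \<in> {1..m}" by fastforce
    then show "enat (ys ! (j - 1)) < fval I j (take (j - 1) ys)"
    proof cases
      case 2
      with xs len ys show ?thesis
        by (auto simp: Iset_def nth_append)
    qed (use b ys len in \<open>simp add: nth_append\<close>)
  qed (simp add: ys len)
qed

lemma card_Iset_Suc:
  assumes "finite (Iset I m)" and "\<And>xs. xs \<in> Iset I m \<Longrightarrow> fval I (Suc m) xs \<noteq> \<infinity>"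
  shows "enat (card (Iset I (Suc m))) = (\<Sum>xs\<in>Iset I m. fval I (Suc m) xs)"
proof -
  define f where "f xs = the_enat (fval I (Suc m) xs)" for xs
  have f: "fval I (Suc m) xs = enat (f xs)" if "xs \<in> Iset I m" for xs
    using assms(2)[OF that] by (auto simp: f_def)
  have "card (Iset I (Suc m)) = card (SIGMA xs:Iset I m. {b. enat b < fval I (Suc m) xs})"
    unfolding Iset_Suc by (rule card_image) (auto simp: inj_on_def)
  also have "\<dots> = (\<Sum>xs\<in>Iset I m. f xs)"
    using assms(1) f by (subst card_SigmaI) (auto intro!: sum.cong)
  finally show ?thesis
    by (simp add: sum_enat f)
qed

lemma replicate_zero_in_Iset:
  assumes "(\<lambda>_. 0) \<notin> I"
  shows "replicate k 0 \<in> Iset I k"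
proof -
  have "0 < fval I j (replicate (j - 1) 0)" for j
  proof -
    have "(\<lambda>_. 0::nat)(j := 0) \<notin> I"
      using assms by (simp add: fun_upd_idem)
    then have "(LEAST t. (\<lambda>_. 0)(j := t) \<in> I) \<noteq> 0" if "(\<lambda>_. 0)(j := t) \<in> I" for t
      using LeastI[of "\<lambda>t. (\<lambda>_. 0)(j := t) \<in> I", OF that] by metis
    then show ?thesis
      by (auto simp: fval_def zero_enat_def mon_of_list_replicate_zero)
  qed
  then show ?thesis
    by (auto simp: Iset_def zero_enat_def take_replicate min_def)
qed

lemma Ilast_subset_Iset: "Ilast n I w mu \<subseteq> Iset I (mu - 1)"
  by (auto simp: Ilast_def)

lemma Ilast_eq_Iset_iff:
  assumes "(\<lambda>_. 0) \<notin> I" and "mu \<le> Suc n"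
  shows "Ilast n I w mu = Iset I (mu - 1) \<longleftrightarrow> (\<forall>i\<in>{1..<mu}. w i = 0)"
proof
  assume "Ilast n I w mu = Iset I (mu - 1)"
  then have "replicate (mu - 1) 0 \<in> Ilast n I w mu"
    using replicate_zero_in_Iset[OF assms(1)] by simp
  then have "mon_of_list (map w [1..<mu]) = (\<lambda>_. 0)"
    by (simp add: Ilast_def mon_of_list_replicate_zero mon_le_zero_iff)
  then show "\<forall>i\<in>{1..<mu}. w i = 0"
    by (simp add: mon_of_list_eq_zero_iff)
next
  assume "\<forall>i\<in>{1..<mu}. w i = 0"
  then have "mon_of_list (map w [1..<mu]) = (\<lambda>_. 0)"
    by (simp add: mon_of_list_eq_zero_iff)
  moreover have "mon_of_list xs \<in> monomials n" if "xs \<in> Iset I (mu - 1)" for xs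
    using that assms(2) by (intro mon_of_list_in_monomials) (auto simp: Iset_def)
  ultimately show "Ilast n I w mu = Iset I (mu - 1)"
    by (auto simp: Ilast_def zero_mon_le)
qed

theorem lemma2p5:
  fixes n mu t :: nat and I :: "(nat \<Rightarrow> nat) set" and w :: "nat \<Rightarrow> nat"
  assumes "monomial_ideal n I"
    and "strongly_stable n I"
    and "is_last_gen n I w"
    and "2 \<le> mu" and "mu \<le> n"
    and "w mu > 0" and "\<forall>i>mu. w i = 0"
    and "t > 0" and "(\<lambda>_. 0)(mu - 1 := t) \<in> I"
  shows "finite (Ilast n I w mu)
    \<and> enat (card (Ilast n I w mu)) \<le> (\<Sum>al\<in>Iset I (mu - 2). fval I (mu - 1) al)
    \<and> (enat (card (Ilast n I w mu)) = (\<Sum>al\<in>Iset I (mu - 2). fval I (mu - 1) al)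
        \<longleftrightarrow> (\<forall>i\<in>{1..<mu}. w i = 0))"
proof -
  have mu: "mu - 1 = Suc (mu - 2)" "1 \<le> mu - 1" "mu - 1 \<le> n"
    using assms(4,5) by auto
  have fin: "finite (Iset I (mu - 1))" "finite (Iset I (mu - 2))"
    using finite_Iset[OF assms(1,2) mu(2,3) assms(9)] by auto
  have "fval I (mu - 1) xs \<noteq> \<infinity>" if "xs \<in> Iset I (mu - 2)" for xs
  proof -
    have "length xs < mu - 1"
      using that mu(1) by (simp add: Iset_def)
    then have "fval I (mu - 1) xs \<le> enat t"
      by (rule fval_le_pure_power[OF assms(1,9) mu(2,3)])
    then show ?thesis
      by (cases "fval I (mu - 1) xs") auto
  qed
  then have "enat (card (Iset I (Suc (mu - 2)))) = (\<Sum>xs\<in>Iset I (mu - 2). fval I (Suc (mu - 2)) xs)"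
    unfolding mu(1) by (intro card_Iset_Suc[OF fin(2)])
  then have sum: "(\<Sum>xs\<in>Iset I (mu - 2). fval I (mu - 1) xs) = enat (card (Iset I (mu - 1)))"
    by (simp only: mu(1))
  have "(\<lambda>_. 0) \<notin> I"
    using assms(3,6) by (intro zero_notin_ideal_with_last_gen) auto
  then have "Ilast n I w mu = Iset I (mu - 1) \<longleftrightarrow> (\<forall>i\<in>{1..<mu}. w i = 0)"
    using assms(5) by (intro Ilast_eq_Iset_iff) auto
  moreover have "card (Ilast n I w mu) = card (Iset I (mu - 1)) \<longleftrightarrow> Ilast n I w mu = Iset I (mu - 1)"
    using card_subset_eq[OF fin(1) Ilast_subset_Iset] by auto
  ultimately show ?thesis
    using card_mono[OF fin(1) Ilast_subset_Iset] finite_subset[OF Ilast_subset_Iset fin(1)]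
    unfolding sum by simp
qed

end
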